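(* Let $P=(T;U,V)$ be a 3M-DAP with $u = v+1$. Then $f(P) > x_u - x_v$.
   Context: A three-matrix division and assignment problem (3M-DAP) $P=(T;U,V)$ is specified by integers $t,u,v$ (numbers of columns), integers $s_t, s_u, s_v$ (numbers of rows) and rationals $x_t, x_u, x_v$ (required row sums), subject to: $t \ge 2$, $u \ge 2$, $v \ge 1$; if $v = 1$ then $v s_v \le (t-2)s_t$; $s_t > 0$, $s_u > 0$, $s_v \ge 0$; $s_u u + s_v v = s_t t$; $s_u x_u + s_v x_v = s_t x_t$; and $x_u/u < x_v/v$. A feasible solution assigns real values to the entries of an $s_t\times t$ matrix $T$, an $s_u \times u$ matrix $U$ and an $s_v \times v$ matrix $V$ so that every row of $T$, $U$, $V$ sums to $x_t$, $x_u$, $x_v$ respectively, and the multiset of entries of $T$ equals the multiset union of the entries of $U$ and $V$. $f(P)$ is the maximum, over feasible solutions, of the smallest entry of $T$. *)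

theory Defs
  imports Main "HOL-Library.Multiset" Complex_Main
begin

text \<open>A three-matrix division and assignment problem P = (T;U,V), given by its parameters
  t u v (numbers of columns), st su sv (numbers of rows), xt xu xv (row sums).\<close>
definition is_3MDAP ::
  "nat \<Rightarrow> nat \<Rightarrow> nat \<Rightarrow> nat \<Rightarrow> nat \<Rightarrow> nat \<Rightarrow> real \<Rightarrow> real \<Rightarrow> real \<Rightarrow> bool" where
  "is_3MDAP t u v st su sv xt xu xv \<longleftrightarrow>
     xt \<in> \<rat> \<and> xu \<in> \<rat> \<and> xv \<in> \<rat> \<and>
     t \<ge> 2 \<and> u \<ge> 2 \<and> v \<ge> 1 \<and>
     (v = 1 \<longrightarrow> int v * int sv \<le> (int t - 2) * int st) \<and>
     st > 0 \<and> su > 0 \<and>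
     su * u + sv * v = st * t \<and>
     real su * xu + real sv * xv = real st * xt \<and>
     xu / real u < xv / real v"

definition entries :: "(nat \<Rightarrow> nat \<Rightarrow> real) \<Rightarrow> nat \<Rightarrow> nat \<Rightarrow> real multiset" where
  "entries M m n = image_mset (\<lambda>(i,j). M i j) (mset_set ({..<m} \<times> {..<n}))"

definition feasible_3MDAP ::
  "nat \<Rightarrow> nat \<Rightarrow> nat \<Rightarrow> nat \<Rightarrow> nat \<Rightarrow> nat \<Rightarrow> real \<Rightarrow> real \<Rightarrow> real \<Rightarrow>
   (nat \<Rightarrow> nat \<Rightarrow> real) \<Rightarrow> (nat \<Rightarrow> nat \<Rightarrow> real) \<Rightarrow> (nat \<Rightarrow> nat \<Rightarrow> real) \<Rightarrow> bool" where
  "feasible_3MDAP t u v st su sv xt xu xv T U V \<longleftrightarrow>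
     (\<forall>i<st. (\<Sum>j<t. T i j) = xt) \<and>
     (\<forall>i<su. (\<Sum>j<u. U i j) = xu) \<and>
     (\<forall>i<sv. (\<Sum>j<v. V i j) = xv) \<and>
     entries T st t = entries U su u + entries V sv v"

text \<open>f(P): the maximum over feasible solutions of the smallest entry of T
  (taken as the supremum; the paper asserts it is attained).\<close>
definition f_3MDAP ::
  "nat \<Rightarrow> nat \<Rightarrow> nat \<Rightarrow> nat \<Rightarrow> nat \<Rightarrow> nat \<Rightarrow> real \<Rightarrow> real \<Rightarrow> real \<Rightarrow> real" where
  "f_3MDAP t u v st su sv xt xu xv =
     Sup {Min ((\<lambda>(i,j). T i j) ` ({..<st} \<times> {..<t})) | T U V.
            feasible_3MDAP t u v st su sv xt xu xv T U V}"

end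

theory Submission
  imports Defs
begin

text \<open>
  Adding d = xu - xv to every entry of a solution adds t d, u d, v d to the row sums. As
  u = v + 1, the problem shifted down by d asks for U- and V-rows with the same sum
  c = xv - v d, and c > 0 is exactly the hypothesis xu / u < xv / v. So it suffices to build
  a solution with equal U- and V-row sums c whose T-entries are all positive.

  For v = 1 every V-entry is c. T-row i contains k i of them, the increments of
  floor (i sv / st), and compensates with a pair Y (i + 1), c - Y i, where Y is affine in the
  fractional part of i sv / st. The pairs Y (i + 1), c - Y (i + 1) are U-rows, and
  Y st = Y 0 makes the multisets match.

  For v \<ge> 2 the entries of T, read row by row, form one sequence h + E (q + 1) - E q with
  0 \<le> E < h vanishing at multiples of t, so every T-row sums to t h. The entries at
  positions r and R + m + r (r < R = su + sv) add up to 2 h + P (r + 1) - P r, where P r is h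
  times the fractional part of r su / R. The su pairs where r su / R passes an integer, padded
  with v - 1 entries h, are the U-rows; the other sv pairs, padded with v - 2 entries h, are
  the V-rows.
\<close>

lemma image_mset_mset_set_eq_sum:
  "finite A \<Longrightarrow> image_mset g (mset_set A) = (\<Sum>x\<in>A. {#g x#})"
  by (induction A rule: finite_induct) auto

lemma sum_nth_eq_sum_list: "(\<Sum>j<length xs. xs ! j) = sum_list xs"
  by (simp add: sum_list_sum_nth atLeast0LessThan)

lemma sum_singleton_nth_eq_mset: "(\<Sum>j<length xs. {#xs ! j#}) = mset xs"
proof -
  have "mset xs = image_mset (nth xs) (mset [0..<length xs])"
    by (metis map_nth mset_map)
  then show ?thesis by (simp add: image_mset_mset_set_eq_sum atLeast0LessThan)
qed

lemma mset_map_upt: "mset (map g [a..<b]) = (\<Sum>q\<in>{a..<b}. {#g q#})"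
  by (simp add: image_mset_mset_set_eq_sum)

lemma sum_replicate_mset: "(\<Sum>i\<in>A. replicate_mset (g i) x) = replicate_mset (\<Sum>i\<in>A. g i) x"
  by (induction A rule: infinite_finite_induct) (auto simp: multiset_eq_iff)

lemma replicate_mset_add: "replicate_mset (a + b) x = replicate_mset a x + replicate_mset b x"
  by (simp add: multiset_eq_iff)

lemma sum_lessThan_shift_cyclic:
  fixes g :: "nat \<Rightarrow> 'a::cancel_comm_monoid_add"
  assumes "g n = g 0"
  shows "(\<Sum>i<n. g (Suc i)) = (\<Sum>i<n. g i)"
  using sum.lessThan_Suc_shift[of g n] sum.lessThan_Suc[of g n] assms
  by (simp add: add.commute)

lemma sum_list_map_upt_telescope:
  fixes g :: "nat \<Rightarrow> 'a::ab_group_add"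
  assumes "a \<le> b"
  shows "sum_list (map (\<lambda>q. g (Suc q) - g q) [a..<b]) = g b - g a"
  using assms by (induction b) (auto simp: le_Suc_eq)

lemma real_mod_step:
  fixes a b n :: nat
  shows "real (Suc n * a mod b) - real (n * a mod b)
           = real a - real b * (real (Suc n * a div b) - real (n * a div b))"
proof -
  have "real (x mod b) = real x - real b * real (x div b)" for x
    using div_mult_mod_eq[of x b] by (metis add_diff_cancel_left' mult.commute of_nat_add of_nat_mult)
  then show ?thesis by (simp add: algebra_simps)
qed

lemma Suc_mult_div_le:
  fixes a b n :: nat
  assumes "a \<le> b"
  shows "n * a div b \<le> Suc n * a div b" and "Suc n * a div b \<le> n * a div b + 1"
proof -
  show "n * a div b \<le> Suc n * a div b" by (intro div_le_mono) simp
  show "Suc n * a div b \<le> n * a div b + 1"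
  proof (cases "b = 0")
    case False
    have "Suc n * a div b \<le> (n * a + b) div b" using assms by (intro div_le_mono) simp
    also have "\<dots> = n * a div b + 1" using False by simp
    finally show ?thesis .
  qed simp
qed

lemma card_div_jumps:
  fixes a b :: nat
  assumes "a \<le> b"
  shows "card {r. r < n \<and> Suc r * a div b \<noteq> r * a div b} = n * a div b"
proof (induction n)
  case (Suc n)
  let ?J = "\<lambda>n. {r. r < n \<and> Suc r * a div b \<noteq> r * a div b}"
  have "?J (Suc n) = (if Suc n * a div b \<noteq> n * a div b then insert n (?J n) else ?J n)"
    by (auto simp: less_Suc_eq)
  then show ?case
    using Suc Suc_mult_div_le[OF assms, of n] by (auto simp: card_insert_if)
qed simp

lemma entries_of_rows:
  assumes "\<And>i. i < m \<Longrightarrow> length (rows i) = n"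
  shows "entries (\<lambda>i j. rows i ! j) m n = (\<Sum>i<m. mset (rows i))"
proof -
  have "entries (\<lambda>i j. rows i ! j) m n = (\<Sum>i<m. \<Sum>j<n. {#rows i ! j#})"
    unfolding entries_def
    by (simp add: image_mset_mset_set_eq_sum sum.cartesian_product case_prod_unfold)
  also have "\<dots> = (\<Sum>i<m. mset (rows i))"
    using assms by (intro sum.cong) (auto simp flip: sum_singleton_nth_eq_mset)
  finally show ?thesis .
qed

lemma feasible_3MDAP_of_rows:
  assumes "\<And>i. i < st \<Longrightarrow> length (Tr i) = t \<and> sum_list (Tr i) = xt"
    and "\<And>i. i < su \<Longrightarrow> length (Ur i) = u \<and> sum_list (Ur i) = xu"
    and "\<And>i. i < sv \<Longrightarrow> length (Vr i) = v \<and> sum_list (Vr i) = xv"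
    and "(\<Sum>i<st. mset (Tr i)) = (\<Sum>i<su. mset (Ur i)) + (\<Sum>i<sv. mset (Vr i))"
  shows "feasible_3MDAP t u v st su sv xt xu xv
           (\<lambda>i j. Tr i ! j) (\<lambda>i j. Ur i ! j) (\<lambda>i j. Vr i ! j)"
  using assms
  by (auto simp: feasible_3MDAP_def entries_of_rows simp flip: sum_nth_eq_sum_list)

lemma entries_add_const: "entries (\<lambda>i j. M i j + d) m n = image_mset (\<lambda>x. x + d) (entries M m n)"
  by (simp add: entries_def multiset.map_comp comp_def case_prod_unfold)

lemma feasible_3MDAP_add_const:
  assumes "feasible_3MDAP t u v st su sv xt xu xv T U V"
  shows "feasible_3MDAP t u v st su sv (xt + real t * d) (xu + real u * d) (xv + real v * d)
           (\<lambda>i j. T i j + d) (\<lambda>i j. U i j + d) (\<lambda>i j. V i j + d)"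
  using assms by (simp add: feasible_3MDAP_def sum.distrib entries_add_const)

lemma Min_entry_le_f_3MDAP:
  assumes feas: "feasible_3MDAP t u v st su sv xt xu xv T U V" and "0 < st" "0 < t"
  shows "Min ((\<lambda>(i, j). T i j) ` ({..<st} \<times> {..<t})) \<le> f_3MDAP t u v st su sv xt xu xv"
  unfolding f_3MDAP_def
proof (rule cSup_upper)
  show "bdd_above {Min ((\<lambda>(i, j). T i j) ` ({..<st} \<times> {..<t})) | T U V.
                     feasible_3MDAP t u v st su sv xt xu xv T U V}"
  proof (rule bdd_aboveI, safe)
    fix T' U' V' assume feas': "feasible_3MDAP t u v st su sv xt xu xv T' U' V'"
    let ?min = "Min ((\<lambda>(i, j). T' i j) ` ({..<st} \<times> {..<t}))"
    have "(\<Sum>j<t. ?min) \<le> (\<Sum>j<t. T' 0 j)"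
      using \<open>0 < st\<close> by (intro sum_mono Min_le) auto
    also have "\<dots> = xt" using feas' \<open>0 < st\<close> by (simp add: feasible_3MDAP_def)
    finally show "?min \<le> xt / real t" using \<open>0 < t\<close> by (simp add: field_simps)
  qed
qed (use feas in blast)

lemma f_3MDAP_gt_of_shifted_positive_solution:
  assumes "feasible_3MDAP t u v st su sv (xt - real t * d) (xu - real u * d) (xv - real v * d) T U V"
    and "\<forall>i<st. \<forall>j<t. 0 < T i j" and "0 < st" and "0 < t"
  shows "d < f_3MDAP t u v st su sv xt xu xv"
proof -
  have shifted: "feasible_3MDAP t u v st su sv xt xu xv
                   (\<lambda>i j. T i j + d) (\<lambda>i j. U i j + d) (\<lambda>i j. V i j + d)"
    using feasible_3MDAP_add_const[OF assms(1), of d] by simp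
  have "d < Min ((\<lambda>(i, j). T i j + d) ` ({..<st} \<times> {..<t}))"
    using assms(2-4) by (subst Min_gr_iff) (auto simp: lessThan_empty_iff)
  also have "\<dots> \<le> f_3MDAP t u v st su sv xt xu xv"
    using Min_entry_le_f_3MDAP[OF shifted] assms(3,4) by simp
  finally show ?thesis .
qed

locale single_column_V_construction =
  fixes t st su sv :: nat and c :: real
  assumes t: "2 \<le> t" and st: "0 < st" and dims: "2 * su + sv = st * t"
    and sv_le: "sv \<le> (t - 2) * st" and c: "0 < c"
begin

definition k :: "nat \<Rightarrow> nat" where
  "k i = Suc i * sv div st - i * sv div st"

definition Y :: "nat \<Rightarrow> real" where
  "Y n = c / 4 + c / 2 * (real (n * sv mod st) / real st)"

definition Trow :: "nat \<Rightarrow> real list" where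
  "Trow i = replicate (k i) c @ [Y (Suc i), c - Y i] @ replicate (t - k i - 2) (c / 2)"

definition Urow :: "nat \<Rightarrow> real list" where
  "Urow i = (if i < st then [Y (Suc i), c - Y (Suc i)] else [c / 2, c / 2])"

lemma Y_bounds: "c / 4 \<le> Y n \<and> Y n < 3 * c / 4"
proof -
  have "real (n * sv mod st) / real st < 1" using st by simp
  then have "c / 2 * (real (n * sv mod st) / real st) < c / 2 * 1"
    using c by (intro mult_strict_left_mono) auto
  then show ?thesis using c by (simp add: Y_def)
qed

lemma k_le: "k i + 2 \<le> t"
proof -
  have "Suc i * sv div st \<le> (i * sv + (t - 2) * st) div st"
    using sv_le by (intro div_le_mono) simp
  also have "\<dots> = i * sv div st + (t - 2)" using st by simp
  finally show ?thesis unfolding k_def using t by linarith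
qed

lemma real_k: "real (k i) = real (Suc i * sv div st) - real (i * sv div st)"
  unfolding k_def by (simp add: of_nat_diff div_le_mono)

lemma Y_step: "Y (Suc i) - Y i = c / 2 * (real sv / real st - real (k i))"
proof -
  have "Y (Suc i) - Y i = c / 2 * ((real (Suc i * sv mod st) - real (i * sv mod st)) / real st)"
    unfolding Y_def by (simp only: diff_divide_distrib right_diff_distrib)
  also have "\<dots> = c / 2 * (real sv / real st - real (k i))"
    unfolding real_mod_step real_k[symmetric] using st by (simp add: field_simps)
  finally show ?thesis .
qed

lemma sum_k: "(\<Sum>i<st. k i) = sv"
proof -
  have "(\<Sum>i<st. real (k i)) = real sv"
    unfolding real_k sum_lessThan_telescope[of "\<lambda>i. real (i * sv div st)"] using st by simp
  then show ?thesis by (metis of_nat_eq_iff of_nat_sum)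
qed

lemma st_le_su: "st \<le> su"
proof -
  have "(t - 2) * st + 2 * st = st * t" using t by (simp add: algebra_simps flip: add_mult_distrib)
  then show ?thesis using dims sv_le by linarith
qed

lemma length_Trow: "length (Trow i) = t"
  using k_le[of i] by (simp add: Trow_def)

lemma sum_list_Trow: "sum_list (Trow i) = real (su + sv) * c / real st"
proof -
  have dims': "2 * real su + real sv = real st * real t"
    using dims by (metis of_nat_add of_nat_mult of_nat_numeral)
  have "sum_list (Trow i) = real (k i) * c + c + (Y (Suc i) - Y i) + (real t - real (k i) - 2) * (c / 2)"
    using k_le[of i] by (simp add: Trow_def sum_list_replicate of_nat_diff algebra_simps)
  also have "\<dots> = c / 2 * (real sv / real st) + real t * c / 2"
    unfolding Y_step by (simp add: algebra_simps)
  also have "\<dots> = real (su + sv) * c / real st"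
  proof -
    have "real t = (2 * real su + real sv) / real st" using dims' st by (simp add: field_simps)
    then show ?thesis using st by (simp add: field_simps)
  qed
  finally show ?thesis .
qed

lemma mset_Trow:
  "mset (Trow i) = replicate_mset (k i) c + {#Y (Suc i)#} + {#c - Y i#}
     + replicate_mset (t - k i - 2) (c / 2)"
  by (simp add: Trow_def)

lemma mset_Trows: "(\<Sum>i<st. mset (Trow i)) = (\<Sum>i<su. mset (Urow i)) + replicate_mset sv c"
proof -
  have "(\<Sum>i<st. t - k i - 2) = 2 * (su - st)"
  proof -
    have "(\<Sum>i<st. t - k i - 2) + (\<Sum>i<st. k i) + (\<Sum>i<st. 2) = (\<Sum>i<st. t)"
      unfolding sum.distrib[symmetric] using k_le t by (intro sum.cong) auto
    then show ?thesis using sum_k dims by simp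
  qed
  then have "(\<Sum>i<st. mset (Trow i)) = replicate_mset sv c + (\<Sum>i<st. {#Y (Suc i)#})
      + (\<Sum>i<st. {#c - Y i#}) + replicate_mset (2 * (su - st)) (c / 2)"
    unfolding mset_Trow sum.distrib sum_replicate_mset sum_k by simp
  also have "(\<Sum>i<st. {#c - Y i#}) = (\<Sum>i<st. {#c - Y (Suc i)#})"
    by (rule sum_lessThan_shift_cyclic[symmetric]) (simp add: Y_def)
  also have "replicate_mset (2 * (su - st)) (c / 2) = (\<Sum>i\<in>{st..<su}. replicate_mset 2 (c / 2))"
    by (simp add: sum_replicate_mset mult.commute)
  also have "\<dots> = (\<Sum>i\<in>{st..<su}. mset (Urow i))"
    by (intro sum.cong) (auto simp: Urow_def numeral_2_eq_2)
  also have "(\<Sum>i<su. mset (Urow i)) = (\<Sum>i<st. mset (Urow i)) + (\<Sum>i\<in>{st..<su}. mset (Urow i))"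
    using st_le_su by (simp add: sum.atLeastLessThan_concat lessThan_atLeast0)
  moreover have "(\<Sum>i<st. mset (Urow i)) = (\<Sum>i<st. {#Y (Suc i)#}) + (\<Sum>i<st. {#c - Y (Suc i)#})"
    unfolding sum.distrib[symmetric] by (intro sum.cong) (auto simp: Urow_def)
  ultimately show ?thesis by (simp add: add_ac)
qed

lemma positive_solution:
  "\<exists>T U V. feasible_3MDAP t 2 1 st su sv (real (su + sv) * c / real st) c c T U V
     \<and> (\<forall>i<st. \<forall>j<t. 0 < T i j)"
proof (intro exI conjI allI impI)
  show "feasible_3MDAP t 2 1 st su sv (real (su + sv) * c / real st) c c
          (\<lambda>i j. Trow i ! j) (\<lambda>i j. Urow i ! j) (\<lambda>i j. [c] ! j)"
    by (rule feasible_3MDAP_of_rows)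
      (use sum_replicate_mset[of "\<lambda>_. 1" c "{..<sv}"] in
        \<open>auto simp: length_Trow sum_list_Trow Urow_def mset_Trows\<close>)
  fix i j assume "j < t"
  then have "Trow i ! j \<in> set (Trow i)" by (simp add: length_Trow)
  then show "0 < Trow i ! j"
    using c Y_bounds[of i] Y_bounds[of "Suc i"] by (auto simp: Trow_def)
qed

end


locale pairing_construction =
  fixes t v st su sv :: nat and c :: real
  assumes t: "2 \<le> t" and v: "2 \<le> v" and st: "0 < st" and su: "0 < su"
    and dims: "su * (v + 1) + sv * v = st * t" and c: "0 < c"
begin

definition R :: nat where "R = su + sv"

definition h :: real where "h = c * real R / real (st * t)"

definition m :: nat where "m = (if t dvd R then 1 else 0)"

definition P :: "nat \<Rightarrow> real" where "P r = h * (real (r * su mod R) / real R)"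

text \<open>E carries P x at x when t does not divide x, and at R + m + x otherwise; since t does
  not divide R + m, E vanishes at all multiples of t.\<close>

definition E :: "nat \<Rightarrow> real" where
  "E q = (if q < R \<and> \<not> t dvd q then P q
          else if R + m \<le> q \<and> q < 2 * R + m \<and> t dvd q - (R + m) then P (q - (R + m))
          else 0)"

definition entry :: "nat \<Rightarrow> real" where "entry q = h + (E (Suc q) - E q)"

definition jumps :: "nat set" where "jumps = {r. r < R \<and> Suc r * su div R \<noteq> r * su div R}"

definition pair_row :: "nat \<Rightarrow> nat \<Rightarrow> real list" where
  "pair_row n r = [entry r, entry (R + m + r)] @ replicate n h"

lemma T_size_eq: "st * t = v * R + su"
  using dims by (simp add: R_def algebra_simps)

lemma R_pos: "0 < R"
  using su by (simp add: R_def)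

lemma h_pos: "0 < h"
  using c R_pos st t by (simp add: h_def)

lemma h_mult_T_size: "h * (real v * real R + real su) = c * real R"
proof -
  have "real (st * t) = real v * real R + real su" by (simp add: T_size_eq)
  moreover have "0 < real v * real R + real su" using su by (intro add_nonneg_pos) simp_all
  ultimately show ?thesis by (simp add: h_def)
qed

lemma P_bounds: "0 \<le> P r \<and> P r < h"
proof -
  have "real (r * su mod R) / real R < 1" using R_pos by simp
  then have "h * (real (r * su mod R) / real R) < h * 1"
    using h_pos by (intro mult_strict_left_mono) auto
  then show ?thesis using h_pos by (simp add: P_def)
qed

lemma P_0: "P 0 = 0" and P_R: "P R = 0"
  by (simp_all add: P_def)

lemma E_bounds: "0 \<le> E q \<and> E q < h"
  using P_bounds h_pos by (simp add: E_def)

lemma entry_pos: "0 < entry q"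
  using E_bounds[of q] E_bounds[of "Suc q"] by (simp add: entry_def)

lemma not_dvd_R_plus_m: "\<not> t dvd R + m"
proof
  assume dvd: "t dvd R + m"
  show False
  proof (cases "t dvd R")
    case True
    then have "t dvd 1" using dvd dvd_add_right_iff[of t R 1] by (simp add: m_def)
    then show False using t by simp
  qed (use dvd in \<open>simp add: m_def\<close>)
qed

lemma E_mult_t: "E (i * t) = 0"
proof -
  have "\<not> t dvd i * t - (R + m)" if "R + m \<le> i * t"
    using not_dvd_R_plus_m that by (metis diff_diff_cancel dvd_diff_nat dvd_triv_right)
  then show ?thesis by (auto simp: E_def)
qed

lemma E_pair: "x \<le> R \<Longrightarrow> E x + E (R + m + x) = P x"
  by (auto simp: E_def P_0 P_R)

lemma entry_filler: "R \<le> q \<and> q < R + m \<or> 2 * R + m \<le> q \<Longrightarrow> entry q = h"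
  by (auto simp: entry_def E_def P_0)

lemma P_step:
  assumes "r < R"
  shows "P (Suc r) - P r = h * real su / real R - (if r \<in> jumps then h else 0)"
proof -
  have "Suc r * su div R \<le> r * su div R + 1" "r * su div R \<le> Suc r * su div R"
    using Suc_mult_div_le[of su R r] by (simp_all add: R_def)
  then have jump: "real (Suc r * su div R) - real (r * su div R) = (if r \<in> jumps then 1 else 0)"
    using assms by (auto simp: jumps_def)
  have "P (Suc r) - P r = h * ((real (Suc r * su mod R) - real (r * su mod R)) / real R)"
    unfolding P_def by (simp only: diff_divide_distrib right_diff_distrib)
  also have "\<dots> = h * real su / real R - (if r \<in> jumps then h else 0)"
    unfolding real_mod_step jump using R_pos by (simp add: field_simps)
  finally show ?thesis .
qed

lemma pair_sum:
  assumes "r < R"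
  shows "entry r + entry (R + m + r) = 2 * h + h * real su / real R - (if r \<in> jumps then h else 0)"
proof -
  have "entry r + entry (R + m + r) = 2 * h + (E (Suc r) + E (R + m + Suc r)) - (E r + E (R + m + r))"
    by (simp add: entry_def)
  also have "\<dots> = 2 * h + (P (Suc r) - P r)"
    using assms E_pair[of r] E_pair[of "Suc r"] by simp
  finally show ?thesis using P_step[OF assms] by simp
qed

lemma card_jumps: "card jumps = su"
  using card_div_jumps[of su R R] R_pos by (simp add: jumps_def R_def)

lemma card_non_jumps: "card ({..<R} - jumps) = sv"
proof -
  have "jumps \<subseteq> {..<R}" by (auto simp: jumps_def)
  then show ?thesis
    using card_jumps card_Diff_subset[of jumps "{..<R}"] finite_subset[of jumps "{..<R}"]
    by (simp add: R_def)
qed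

lemma sum_list_window: "sum_list (map entry [i * t..<i * t + t]) = real (su + sv) * c / real st"
proof -
  have "sum_list (map entry [i * t..<i * t + t])
          = real t * h + (E (Suc i * t) - E (i * t))"
    unfolding entry_def sum_list_addf
    by (simp add: sum_list_map_upt_telescope sum_list_triv add.commute)
  also have "\<dots> = real (su + sv) * c / real st"
    using t by (simp add: E_mult_t h_def R_def del: mult_Suc)
  finally show ?thesis .
qed

lemma pairs_fit: "2 * R + m \<le> st * t"
proof -
  have "2 * R \<le> v * R" using v by (rule mult_le_mono1)
  moreover have "m \<le> 1" by (simp add: m_def)
  ultimately show ?thesis using su T_size_eq by linarith
qed

lemma mset_windows:
  "(\<Sum>i<st. mset (map entry [i * t..<i * t + t]))
     = (\<Sum>r<R. {#entry r#} + {#entry (R + m + r)#}) + replicate_mset (st * t - 2 * R) h"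
proof -
  have upt_split: "[a..<c] = [a..<b] @ [b..<c]" if "a \<le> b" "b \<le> c" for a b c :: nat
    using upt_add_eq_append[of a b "c - b"] that by simp
  have fillers: "map entry [a..<b] = replicate (b - a) h"
    if "\<And>q. a \<le> q \<Longrightarrow> q < b \<Longrightarrow> entry q = h" for a b
    using that by (intro nth_equalityI) auto
  have "(\<Sum>i<st. mset (map entry [i * t..<i * t + t])) = mset (map entry [0..<st * t])"
    unfolding mset_map_upt atLeast0LessThan sum.nat_group ..
  also have "[0..<st * t] = [0..<R] @ [R..<R + m] @ [R + m..<R + (R + m)] @ [R + (R + m)..<st * t]"
    using pairs_fit by (simp add: upt_split[of 0 R "st * t"] upt_split[of R "R + m" "st * t"]
        upt_split[of "R + m" "R + (R + m)" "st * t"])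
  also have "mset (map entry \<dots>) = mset (map entry [0..<R]) + mset (map (\<lambda>r. entry (R + m + r)) [0..<R])
      + (replicate_mset m h + replicate_mset (st * t - (R + (R + m))) h)"
  proof -
    have "map entry [R + m..<R + (R + m)] = map (\<lambda>r. entry (R + m + r)) [0..<R]"
      unfolding map_add_upt[of "R + m" R, symmetric] by (simp add: add.commute)
    then show ?thesis by (simp add: fillers entry_filler add_ac)
  qed
  also have "\<dots> = (\<Sum>r<R. {#entry r#} + {#entry (R + m + r)#}) + replicate_mset (st * t - 2 * R) h"
    using pairs_fit unfolding mset_map_upt atLeast0LessThan sum.distrib
    by (simp add: mult_2 flip: replicate_mset_add)
  finally show ?thesis .
qed

lemma length_pair_row: "length (pair_row n r) = n + 2"
  by (simp add: pair_row_def)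

lemma mset_pair_row: "mset (pair_row n r) = {#entry r#} + {#entry (R + m + r)#} + replicate_mset n h"
  by (simp add: pair_row_def)

lemma sum_list_pair_row:
  assumes "r < R"
  shows "sum_list (pair_row n r)
     = (real n + 2) * h + h * real su / real R - (if r \<in> jumps then h else 0)"
proof -
  have "sum_list (pair_row n r) = (entry r + entry (R + m + r)) + real n * h"
    by (simp add: pair_row_def sum_list_replicate)
  then show ?thesis unfolding pair_sum[OF assms] by (simp add: algebra_simps)
qed

lemma sum_list_pair_row_jump: "r \<in> jumps \<Longrightarrow> sum_list (pair_row (v - 1) r) = c"
  using v R_pos h_mult_T_size
  by (auto simp: sum_list_pair_row jumps_def of_nat_diff field_simps)

lemma sum_list_pair_row_non_jump: "r \<in> {..<R} - jumps \<Longrightarrow> sum_list (pair_row (v - 2) r) = c"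
  using v R_pos h_mult_T_size
  by (auto simp: sum_list_pair_row of_nat_diff field_simps)

lemma mset_pair_rows:
  assumes "bij_betw \<phi> {..<su} jumps" and "bij_betw \<psi> {..<sv} ({..<R} - jumps)"
  shows "(\<Sum>k<su. mset (pair_row (v - 1) (\<phi> k))) + (\<Sum>k<sv. mset (pair_row (v - 2) (\<psi> k)))
           = (\<Sum>r<R. {#entry r#} + {#entry (R + m + r)#}) + replicate_mset (st * t - 2 * R) h"
proof -
  let ?G = "\<lambda>r. {#entry r#} + {#entry (R + m + r)#}"
  have jumps_sub: "jumps \<subseteq> {..<R}" by (auto simp: jumps_def)
  have "(\<Sum>k<su. mset (pair_row (v - 1) (\<phi> k))) = (\<Sum>r\<in>jumps. mset (pair_row (v - 1) r))"
    by (rule sum.reindex_bij_betw[OF assms(1)])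
  also have "\<dots> = (\<Sum>r\<in>jumps. ?G r) + replicate_mset (su * (v - 1)) h"
    unfolding mset_pair_row sum.distrib sum_replicate_mset using card_jumps by simp
  finally have U: "(\<Sum>k<su. mset (pair_row (v - 1) (\<phi> k)))
                     = (\<Sum>r\<in>jumps. ?G r) + replicate_mset (su * (v - 1)) h" .
  have "(\<Sum>k<sv. mset (pair_row (v - 2) (\<psi> k))) = (\<Sum>r\<in>{..<R} - jumps. mset (pair_row (v - 2) r))"
    by (rule sum.reindex_bij_betw[OF assms(2)])
  also have "\<dots> = (\<Sum>r\<in>{..<R} - jumps. ?G r) + replicate_mset (sv * (v - 2)) h"
    unfolding mset_pair_row sum.distrib sum_replicate_mset using card_non_jumps by simp
  finally have V: "(\<Sum>k<sv. mset (pair_row (v - 2) (\<psi> k)))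
                     = (\<Sum>r\<in>{..<R} - jumps. ?G r) + replicate_mset (sv * (v - 2)) h" .
  have count: "su * (v - 1) + sv * (v - 2) = st * t - 2 * R"
  proof -
    obtain w where "v = w + 2" using v by (metis le_add_diff_inverse2)
    then show ?thesis using T_size_eq by (simp add: R_def algebra_simps)
  qed
  have "(\<Sum>r<R. ?G r) = (\<Sum>r\<in>{..<R} - jumps. ?G r) + (\<Sum>r\<in>jumps. ?G r)"
    using jumps_sub by (intro sum.subset_diff) auto
  then show ?thesis unfolding U V count[symmetric] replicate_mset_add by (simp add: add_ac)
qed

lemma positive_solution:
  "\<exists>T U V. feasible_3MDAP t (v + 1) v st su sv (real (su + sv) * c / real st) c c T U V
     \<and> (\<forall>i<st. \<forall>j<t. 0 < T i j)"
proof -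
  have "finite jumps" by (auto simp: jumps_def)
  then obtain \<phi> where \<phi>: "bij_betw \<phi> {..<su} jumps"
    using finite_same_card_bij[of "{..<su}" jumps] card_jumps by auto
  obtain \<psi> where \<psi>: "bij_betw \<psi> {..<sv} ({..<R} - jumps)"
    using finite_same_card_bij[of "{..<sv}" "{..<R} - jumps"] card_non_jumps by auto
  have "feasible_3MDAP t (v + 1) v st su sv (real (su + sv) * c / real st) c c
          (\<lambda>i j. map entry [i * t..<i * t + t] ! j) (\<lambda>k j. pair_row (v - 1) (\<phi> k) ! j)
          (\<lambda>k j. pair_row (v - 2) (\<psi> k) ! j)"
  proof (rule feasible_3MDAP_of_rows)
    show "length (pair_row (v - 1) (\<phi> k)) = v + 1 \<and> sum_list (pair_row (v - 1) (\<phi> k)) = c"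
      if "k < su" for k
      using v bij_betwE[OF \<phi>] that sum_list_pair_row_jump[of "\<phi> k"] by (simp add: length_pair_row)
    show "length (pair_row (v - 2) (\<psi> k)) = v \<and> sum_list (pair_row (v - 2) (\<psi> k)) = c"
      if "k < sv" for k
      using v bij_betwE[OF \<psi>] that sum_list_pair_row_non_jump[of "\<psi> k"] by (simp add: length_pair_row)
    show "(\<Sum>i<st. mset (map entry [i * t..<i * t + t]))
        = (\<Sum>k<su. mset (pair_row (v - 1) (\<phi> k))) + (\<Sum>k<sv. mset (pair_row (v - 2) (\<psi> k)))"
      unfolding mset_windows mset_pair_rows[OF \<phi> \<psi>] ..
  qed (simp_all add: sum_list_window)
  moreover have "0 < map entry [i * t..<i * t + t] ! j" if "j < t" for i j
    using that entry_pos by simp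
  ultimately show ?thesis by blast
qed

end


lemma positive_solution_with_equal_UV_row_sums:
  assumes "2 \<le> t" "1 \<le> v" "0 < st" "0 < su" "su * (v + 1) + sv * v = st * t"
    and "v = 1 \<longrightarrow> sv \<le> (t - 2) * st" and "0 < c"
  shows "\<exists>T U V. feasible_3MDAP t (v + 1) v st su sv (real (su + sv) * c / real st) c c T U V
           \<and> (\<forall>i<st. \<forall>j<t. 0 < T i j)"
proof (cases "v = 1")
  case True
  interpret single_column_V_construction t st su sv c
    using assms True by unfold_locales simp_all
  show ?thesis using positive_solution True by (simp add: numeral_2_eq_2)
next
  case False
  interpret pairing_construction t v st su sv c
    using assms False by unfold_locales simp_all
  show ?thesis by (rule positive_solution)
qed

lemma is_3MDAP_margin_pos:
  assumes "is_3MDAP t (v + 1) v st su sv xt xu xv"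
  shows "0 < xv - real v * (xu - xv)"
proof -
  have "xu / real (v + 1) < xv / real v" and "1 \<le> v"
    using assms unfolding is_3MDAP_def by auto
  then have "xu * real v < xv * (real v + 1)" by (simp add: field_simps)
  then show ?thesis by (simp add: algebra_simps)
qed

lemma is_3MDAP_single_column_bound:
  assumes "is_3MDAP t u v st su sv xt xu xv" and "v = 1"
  shows "sv \<le> (t - 2) * st"
proof -
  have t: "2 \<le> t" using assms unfolding is_3MDAP_def by auto
  have "int sv \<le> (int t - 2) * int st" using assms unfolding is_3MDAP_def by auto
  also have "(int t - 2) * int st = int ((t - 2) * st)" using t by (simp add: of_nat_diff)
  finally show ?thesis by (simp only: of_nat_le_iff)
qed

theorem lemma14:
  fixes t u v st su sv :: nat and xt xu xv :: real
  assumes "is_3MDAP t u v st su sv xt xu xv"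
    and "u = v + 1"
  shows "f_3MDAP t u v st su sv xt xu xv > xu - xv"
proof -
  have P: "is_3MDAP t (v + 1) v st su sv xt xu xv" using assms by simp
  have t: "2 \<le> t" and v: "1 \<le> v" and st: "0 < st" and su: "0 < su"
    and dims: "su * (v + 1) + sv * v = st * t"
    and sums: "real su * xu + real sv * xv = real st * xt"
    using P unfolding is_3MDAP_def by auto
  define d where "d = xu - xv"
  define c where "c = xv - real v * d"
  obtain T U V
    where feas: "feasible_3MDAP t (v + 1) v st su sv (real (su + sv) * c / real st) c c T U V"
      and pos: "\<forall>i<st. \<forall>j<t. 0 < T i j"
    using positive_solution_with_equal_UV_row_sums[OF t v st su dims]
      is_3MDAP_single_column_bound[OF P] is_3MDAP_margin_pos[OF P] unfolding c_def d_def by blast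
  have "real st * real t = real su * (real v + 1) + real sv * real v"
    using dims by (metis of_nat_1 of_nat_add of_nat_mult)
  then have "real (su + sv) * c + real st * real t * d = real st * xt"
    unfolding sums[symmetric] by (simp add: c_def d_def algebra_simps)
  then have "xt - real t * d = real (su + sv) * c / real st"
    using st by (simp add: field_simps)
  moreover have "xu - real (v + 1) * d = c" and "xv - real v * d = c"
    by (simp_all add: c_def d_def algebra_simps)
  ultimately show ?thesis
    using f_3MDAP_gt_of_shifted_positive_solution[of t u v st su sv xt d xu xv T U V] feas pos st t
      assms(2) unfolding d_def by simp
qed

end
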